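(* Let $d,T\ge 1$, let $0<b<c$, and let $x_1,\dots,x_T\in\mathbb{R}^d$, $y_1,\dots,y_T\in\mathbb{R}$ satisfy $\|x_t\|^2\le X^2$ and $|y_t|\le Y$ for all $t$, for some $X>0$, $Y\ge 0$. Let $\hat y_t$ be the LASER predictions and $D_t$ the LASER matrices (defined in the context), and write $L_T(\mathrm{LASER})=\sum_{t=1}^T(y_t-\hat y_t)^2$. Then for every sequence $u_1,\dots,u_T\in\mathbb{R}^d$, with $V=\sum_{t=1}^{T-1}\|u_t-u_{t+1}\|^2$ and $L_T(\{u_t\})=\sum_{t=1}^T (x_t^\top u_t-y_t)^2$, \[ L_T(\mathrm{LASER}) \le b\|u_1\|^2 + L_T(\{u_t\}) + Y^2\ln\Big|\tfrac{1}{b}D_T\Big| + c^{-1}Y^2\,\mathrm{Tr}(D_0) + cV + c^{-1}Y^2Td\,\max\Big\{\tfrac{3X^2+\sqrt{X^4+4X^2c}}{2},\; b+X^2\Big\}. \] Furthermore, suppose $b=\varepsilon c$ for some $0<\varepsilon<1$, and let $\mu=\max\big\{\tfrac{9}{8}X^2,\ \tfrac{(b+X^2)^2}{8X^2}\big\}$. If $V>0$, $V\le T\,\frac{\sqrt2\,Y^2dX}{\mu^{3/2}}$, and $c=\big(\sqrt2\,TY^2dX/V\big)^{2/3}$, then \[ L_T(\mathrm{LASER}) \le b\|u_1\|^2 + 3\big(\sqrt2\,Y^2dX\big)^{2/3}T^{2/3}V^{1/3} + \frac{\varepsilon}{1-\varepsilon}Y^2d + L_T(\{u_t\}) + Y^2\ln\Big|\tfrac1b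 D_T\Big|. \]
   Context: LASER algorithm: with parameters $0<b<c$, set $D_0=\frac{bc}{c-b}I\in\mathbb{R}^{d\times d}$ and $e_0=0\in\mathbb{R}^d$. For $t=1,\dots,T$: compute $D_t=\big(D_{t-1}^{-1}+c^{-1}I\big)^{-1}+x_tx_t^\top$; predict $\hat y_t = x_t^\top D_t^{-1}\big(I+c^{-1}D_{t-1}\big)^{-1}e_{t-1}$; then set $e_t=\big(I+c^{-1}D_{t-1}\big)^{-1}e_{t-1}+y_tx_t$. $|A|$ denotes the determinant of a matrix $A$, $\mathrm{Tr}$ the trace, $I$ the $d\times d$ identity. *)

theory Defs
  imports "HOL-Analysis.Analysis"
begin

text \<open>LASER algorithm. Vectors in R^d are real^'n (d = CARD('n)); matrices real^'n^'n.
  Inputs x t, y t are used for t = 1..T (index 0 unused).\<close>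

definition outer :: "real^'n \<Rightarrow> real^'n^'n" where
  "outer v = (\<chi> i j. v$i * v$j)"

fun laser_D :: "real \<Rightarrow> real \<Rightarrow> (nat \<Rightarrow> real^'n) \<Rightarrow> nat \<Rightarrow> real^'n^'n" where
  "laser_D b c x 0 = ((b * c) / (c - b)) *\<^sub>R mat 1"
| "laser_D b c x (Suc t) =
     matrix_inv (matrix_inv (laser_D b c x t) + (1 / c) *\<^sub>R mat 1) + outer (x (Suc t))"

fun laser_e :: "real \<Rightarrow> real \<Rightarrow> (nat \<Rightarrow> real^'n) \<Rightarrow> (nat \<Rightarrow> real) \<Rightarrow> nat \<Rightarrow> real^'n" where
  "laser_e b c x y 0 = 0"
| "laser_e b c x y (Suc t) =
     matrix_inv (mat 1 + (1 / c) *\<^sub>R laser_D b c x t) *v laser_e b c x y t + y (Suc t) *\<^sub>R x (Suc t)"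

text \<open>Prediction at round t (meaningful for t \<ge> 1).\<close>
definition laser_pred :: "real \<Rightarrow> real \<Rightarrow> (nat \<Rightarrow> real^'n) \<Rightarrow> (nat \<Rightarrow> real) \<Rightarrow> nat \<Rightarrow> real" where
  "laser_pred b c x y t =
     x t \<bullet> (matrix_inv (laser_D b c x t) *v
       (matrix_inv (mat 1 + (1 / c) *\<^sub>R laser_D b c x (t - 1)) *v laser_e b c x y (t - 1)))"

definition laser_loss :: "real \<Rightarrow> real \<Rightarrow> (nat \<Rightarrow> real^'n) \<Rightarrow> (nat \<Rightarrow> real) \<Rightarrow> nat \<Rightarrow> real" where
  "laser_loss b c x y T = (\<Sum>t=1..T. (y t - laser_pred b c x y t)^2)"

definition comp_loss :: "(nat \<Rightarrow> real^'n) \<Rightarrow> (nat \<Rightarrow> real^'n) \<Rightarrow> (nat \<Rightarrow> real) \<Rightarrow> nat \<Rightarrow> real" where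
  "comp_loss u x y T = (\<Sum>t=1..T. (x t \<bullet> u t - y t)^2)"

definition variation :: "(nat \<Rightarrow> real^'n) \<Rightarrow> nat \<Rightarrow> real" where
  "variation u T = (\<Sum>t=1..T-1. (norm (u t - u (Suc t)))^2)"

end

theory Submission
  imports Defs
begin

text \<open>Each LASER round shrinks \<open>D\<^sub>t\<close> to \<open>A\<^sub>t = (D\<^sub>t\<^sup>-\<^sup>1 + c\<^sup>-\<^sup>1 I)\<^sup>-\<^sup>1\<close>, the parallel sum
  of \<open>D\<^sub>t\<close> and \<open>c I\<close>, and then adds \<open>x x\<^sup>T\<close>. Write \<open>Q\<^sub>D(v) = v\<^sup>T D v\<close>,
  \<open>W\<^sub>t = D\<^sub>t\<^sup>-\<^sup>1 e\<^sub>t\<close> and \<open>r = x\<^sup>T A\<^sub>t\<^sup>-\<^sup>1 x\<close>. With \<open>p\<close> the prediction, one round satisfies the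
  potential inequality of the Vovk-Azoury-Warmuth forecaster,
  \<open>(y - p)\<^sup>2 - y\<^sup>2 r/(1+r) + Q\<^bsub>D\<^sub>t\<^sub>+\<^sub>1\<^esub>(u - W\<^sub>t\<^sub>+\<^sub>1) \<le> Q\<^bsub>A\<^sub>t\<^esub>(u - W\<^sub>t) + (x\<^sup>T u - y)\<^sup>2\<close>,
  and the parallel sum is an infimal convolution,
  \<open>Q\<^sub>A(u' - W) \<le> Q\<^sub>D(u - W) + c |u - u'|\<^sup>2\<close>, which charges the drift of the comparator
  to \<open>c V\<close>. Telescoping leaves \<open>\<Sum> y\<^sup>2 r/(1+r) \<le> Y\<^sup>2 \<Sum> (ln det D\<^sub>t\<^sub>+\<^sub>1 - ln det A\<^sub>t)\<close>, which
  telescopes to \<open>ln det D\<^sub>T\<close> up to a loss of \<open>ln (det D\<^sub>t / det A\<^sub>t) \<le> d M/c\<close> per round;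
  here \<open>D\<^sub>t \<le> M I\<close> because \<open>M\<close> lies above the fixed point of \<open>K \<mapsto> K c/(K + c) + X\<^sup>2\<close>.
  The tuned bound chooses \<open>c\<close> to balance \<open>c V\<close> against the resulting \<open>T/\<surd>c\<close> term.\<close>

section \<open>Matrix inverses\<close>

lemma matrix_inv_right: "invertible M \<Longrightarrow> M ** matrix_inv M = mat 1"
  and matrix_inv_left: "invertible M \<Longrightarrow> matrix_inv M ** M = mat 1"
  for M :: "real^'n^'n"
  unfolding invertible_def matrix_inv_def by (metis (mono_tags, lifting) someI_ex)+

lemma matrix_inv_eq:
  fixes M B :: "real^'n^'n"
  assumes "M ** B = mat 1" "B ** M = mat 1"
  shows "matrix_inv M = B"
proof -
  have "invertible M" using assms invertible_def by blast
  then have "matrix_inv M = (matrix_inv M ** M) ** B"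
    by (metis assms(1) matrix_mul_assoc matrix_mul_rid)
  then show ?thesis by (simp add: matrix_inv_left \<open>invertible M\<close>)
qed

lemma matrix_inv_mult:
  fixes M N :: "real^'n^'n"
  assumes "invertible M" "invertible N"
  shows "matrix_inv (M ** N) = matrix_inv N ** matrix_inv M"
  by (rule matrix_inv_eq)
     (simp_all add: matrix_mul_assoc matrix_inv_right matrix_inv_left assms
        flip: matrix_mul_assoc[of M N] matrix_mul_assoc[of "matrix_inv N"])

lemma transpose_matrix_inv:
  fixes M :: "real^'n^'n"
  assumes "invertible M"
  shows "transpose (matrix_inv M) = matrix_inv (transpose M)"
  by (rule matrix_inv_eq[symmetric])
     (simp_all add: matrix_transpose_mul[symmetric] matrix_inv_right matrix_inv_left assms)

lemma matrix_inv_scaled_id: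
  assumes "k \<noteq> 0"
  shows "matrix_inv (k *\<^sub>R mat 1 :: real^'n^'n) = (1 / k) *\<^sub>R mat 1"
  by (rule matrix_inv_eq) (simp_all add: assms flip: scalar_matrix_assoc)

lemma matrix_inv_mult_vector:
  fixes M :: "real^'n^'n"
  assumes "invertible M"
  shows "M *v (matrix_inv M *v v) = v" "matrix_inv M *v (M *v v) = v"
  by (simp_all add: matrix_vector_mul_assoc matrix_inv_right matrix_inv_left assms)

lemma matrix_inv_vector_eq:
  fixes M :: "real^'n^'n"
  assumes "invertible M" "M *v z = v"
  shows "matrix_inv M *v v = z"
  using matrix_inv_mult_vector(2)[OF assms(1), of z] assms(2) by simp

lemma det_matrix_inv: "invertible (M::real^'n^'n) \<Longrightarrow> det (matrix_inv M) = 1 / det M"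
  by (metis det_I det_mul invertible_det_nz matrix_inv_right nonzero_eq_divide_eq mult.commute)

section \<open>Symmetric positive definite matrices\<close>

definition spd :: "real^'n^'n \<Rightarrow> bool" where
  "spd M \<longleftrightarrow> transpose M = M \<and> (\<forall>v. v \<noteq> 0 \<longrightarrow> 0 < v \<bullet> (M *v v))"

lemma spd_symmetric: "spd M \<Longrightarrow> (M *v u) \<bullet> v = u \<bullet> (M *v v)"
  by (metis spd_def dot_lmul_matrix vector_transpose_matrix)

lemma spd_form_nonneg: "spd M \<Longrightarrow> 0 \<le> v \<bullet> (M *v v)"
  unfolding spd_def by (cases "v = 0") (auto intro: less_imp_le)

lemma spd_invertible: "spd M \<Longrightarrow> invertible M"
  unfolding spd_def
  by (metis inner_zero_right less_irrefl invertible_left_inverse matrix_left_invertible_ker)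

lemma spd_matrix_inv:
  fixes M :: "real^'n^'n"
  assumes "spd M"
  shows "spd (matrix_inv M)"
  unfolding spd_def
proof (intro conjI allI impI)
  have "invertible M" using assms spd_invertible by blast
  then show "transpose (matrix_inv M) = matrix_inv M"
    using assms by (simp add: transpose_matrix_inv spd_def)
  fix v :: "real^'n" assume "v \<noteq> 0"
  define z where "z = matrix_inv M *v v"
  have "M *v z = v" using matrix_inv_mult_vector(1)[OF \<open>invertible M\<close>] z_def by simp
  then have "z \<noteq> 0" using \<open>v \<noteq> 0\<close> by auto
  then have "0 < z \<bullet> (M *v z)" using assms unfolding spd_def by blast
  then show "0 < v \<bullet> (matrix_inv M *v v)"
    using \<open>M *v z = v\<close> by (simp add: z_def inner_commute)
qed

lemma spd_add:
  assumes "spd A" "transpose B = B" "\<And>v. 0 \<le> v \<bullet> (B *v v)"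
  shows "spd (A + B)"
  using assms unfolding spd_def
  by (auto simp: matrix_vector_mult_add_rdistrib inner_add_right add_pos_nonneg)
     (simp add: transpose_def vec_eq_iff)

lemma transpose_outer: "transpose (outer x) = outer x"
  by (simp add: outer_def transpose_def vec_eq_iff mult.commute)

lemma outer_mult_vector: "outer x *v v = (x \<bullet> v) *\<^sub>R x"
  by (simp add: outer_def vec_eq_iff matrix_vector_mult_def inner_vec_def sum_distrib_left
      mult.commute mult.left_commute)

lemma outer_form: "v \<bullet> (outer x *v v) = (x \<bullet> v)^2"
  by (simp add: outer_mult_vector power2_eq_square inner_commute)

lemma spd_add_outer: "spd A \<Longrightarrow> spd (A + outer x)"
  by (simp add: spd_add transpose_outer outer_form)

lemma scaled_id_mult_vector: "(k *\<^sub>R mat 1) *v v = k *\<^sub>R (v :: real^'n)"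
  by (metis matrix_vector_mul_lid scaleR_matrix_vector_assoc)

lemma scaled_id_form: "v \<bullet> ((k *\<^sub>R mat 1) *v v) = k * (norm v)^2" for v :: "real^'n"
  by (simp add: scaled_id_mult_vector power2_norm_eq_inner)

lemma spd_scaled_id: "0 < k \<Longrightarrow> spd (k *\<^sub>R mat 1 :: real^'n^'n)"
  by (simp add: spd_def transpose_scalar scaled_id_form)

lemma spd_add_scaled_id: "spd A \<Longrightarrow> 0 \<le> s \<Longrightarrow> spd (A + s *\<^sub>R mat 1)"
  by (rule spd_add) (simp_all add: transpose_scalar scaled_id_form)

text \<open>Along the segment from \<open>I\<close> to \<open>P\<close> all matrices are positive definite, hence
  invertible, so the determinant cannot change sign.\<close>

lemma spd_det_pos:
  assumes "spd P"
  shows "0 < det P"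
proof (rule ccontr)
  define f where "f t = det ((1 - t) *\<^sub>R mat 1 + t *\<^sub>R P)" for t :: real
  assume "\<not> 0 < det P"
  then have "f 1 \<le> 0" "0 \<le> f 0" by (simp_all add: f_def)
  moreover have "continuous_on {0..1} f"
    unfolding f_def det_def by (intro continuous_intros)
  ultimately obtain t where t: "0 \<le> t" "t \<le> 1" "f t = 0"
    using IVT2'[of f 1 0 0] by auto
  have "spd ((1 - t) *\<^sub>R mat 1 + t *\<^sub>R P)"
  proof (cases "t = 1")
    case False
    then show ?thesis using t assms
      by (intro spd_add spd_scaled_id)
         (auto simp: spd_def transpose_scalar spd_form_nonneg simp flip: scaleR_matrix_vector_assoc)
  qed (use assms in simp)
  then show False
    using t spd_invertible invertible_det_nz unfolding f_def by blast
qed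

lemma spd_inverse_form_ge:
  assumes "spd D"
  shows "2 * (w \<bullet> v) - w \<bullet> (D *v w) \<le> v \<bullet> (matrix_inv D *v v)"
proof -
  define z where "z = matrix_inv D *v v"
  have Dz: "D *v z = v"
    using matrix_inv_mult_vector(1)[OF spd_invertible[OF assms]] by (simp add: z_def)
  have "0 \<le> (w - z) \<bullet> (D *v (w - z))" by (rule spd_form_nonneg[OF assms])
  also have "\<dots> = w \<bullet> (D *v w) - 2 * (w \<bullet> v) + v \<bullet> z"
    using spd_symmetric[OF assms, of z w] Dz
    by (simp add: matrix_vector_mult_diff_distrib inner_diff_left inner_diff_right inner_commute)
  finally show ?thesis by (simp add: z_def)
qed

lemma matrix_inv_form_ge:
  assumes "spd D" "0 < K" "\<And>v. v \<bullet> (D *v v) \<le> K * (norm v)^2"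
  shows "(norm v)^2 / K \<le> v \<bullet> (matrix_inv D *v v)"
proof -
  define w where "w = (1 / K) *\<^sub>R v"
  have "w \<bullet> (D *v w) = (1 / K)^2 * (v \<bullet> (D *v v))"
    by (simp add: w_def matrix_vector_mult_scaleR power2_eq_square)
  also have "\<dots> \<le> (1 / K)^2 * (K * (norm v)^2)"
    using assms(3) by (rule mult_left_mono) simp
  also have "\<dots> = (norm v)^2 / K"
    using assms(2) by (simp add: power2_eq_square)
  finally have "(norm v)^2 / K \<le> 2 * (w \<bullet> v) - w \<bullet> (D *v w)"
    by (simp add: w_def power2_norm_eq_inner)
  then show ?thesis using spd_inverse_form_ge[OF assms(1)] by (rule order_trans)
qed

lemma matrix_inv_form_le:
  assumes "spd P" "0 < \<alpha>" "\<And>v. \<alpha> * (norm v)^2 \<le> v \<bullet> (P *v v)"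
  shows "v \<bullet> (matrix_inv P *v v) \<le> (norm v)^2 / \<alpha>"
proof -
  define z where "z = matrix_inv P *v v"
  have Pz: "P *v z = v"
    using matrix_inv_mult_vector(1)[OF spd_invertible[OF assms(1)]] by (simp add: z_def)
  have "\<alpha> * (z \<bullet> z) \<le> v \<bullet> z"
    using assms(3)[of z] Pz by (simp add: power2_norm_eq_inner inner_commute)
  then have "\<alpha> * (\<alpha> * (z \<bullet> z)) \<le> \<alpha> * (v \<bullet> z)"
    using assms(2) by simp
  moreover have "0 \<le> (v - \<alpha> *\<^sub>R z) \<bullet> (v - \<alpha> *\<^sub>R z)" by simp
  then have "2 * (\<alpha> * (v \<bullet> z)) \<le> v \<bullet> v + \<alpha> * (\<alpha> * (z \<bullet> z))"
    by (simp add: inner_diff_left inner_diff_right inner_commute algebra_simps)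
  ultimately have "\<alpha> * (v \<bullet> z) \<le> v \<bullet> v" by linarith
  then show ?thesis
    using assms(2) by (simp add: z_def power2_norm_eq_inner field_simps)
qed

section \<open>Parallel sum with a multiple of the identity\<close>

text \<open>The parallel sum of \<open>D\<close> and \<open>c I\<close>; its quadratic form is the infimal convolution
  \<open>w \<mapsto> min\<^sub>v (v\<^sup>T D v + c |v - w|\<^sup>2)\<close>.\<close>

definition parallel_sum_id :: "real^'n^'n \<Rightarrow> real \<Rightarrow> real^'n^'n" where
  "parallel_sum_id D c = matrix_inv (matrix_inv D + (1 / c) *\<^sub>R mat 1)"

lemma spd_parallel_sum_id: "spd D \<Longrightarrow> 0 < c \<Longrightarrow> spd (parallel_sum_id D c)"
  unfolding parallel_sum_id_def by (simp add: spd_matrix_inv spd_add_scaled_id)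

lemma parallel_sum_id_scaled_id:
  assumes "0 < k" "0 < c"
  shows "parallel_sum_id (k *\<^sub>R mat 1 :: real^'n^'n) c = (k * c / (k + c)) *\<^sub>R mat 1"
proof -
  have "matrix_inv (k *\<^sub>R mat 1 :: real^'n^'n) + (1 / c) *\<^sub>R mat 1 = ((k + c) / (k * c)) *\<^sub>R mat 1"
    using assms by (simp add: matrix_inv_scaled_id field_simps flip: scaleR_left_distrib)
  then show ?thesis
    using assms unfolding parallel_sum_id_def by (simp add: matrix_inv_scaled_id)
qed

lemma matrix_inv_id_add_scaled:
  fixes D :: "real^'n^'n"
  assumes "spd D" "0 < c"
  shows "matrix_inv (mat 1 + (1 / c) *\<^sub>R D) = parallel_sum_id D c ** matrix_inv D"
proof -
  have iD: "invertible D" using assms(1) spd_invertible by blast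
  have "mat 1 + (1 / c) *\<^sub>R D = D ** (matrix_inv D + (1 / c) *\<^sub>R mat 1)"
    by (simp add: matrix_add_ldistrib matrix_inv_right[OF iD] matrix_scalar_ac)
  moreover have "invertible (matrix_inv D + (1 / c) *\<^sub>R mat 1)"
    using assms by (simp add: spd_invertible spd_add_scaled_id spd_matrix_inv)
  ultimately show ?thesis
    unfolding parallel_sum_id_def by (simp add: matrix_inv_mult iD)
qed

lemma parallel_sum_id_form_le:
  assumes "spd D" "0 < c"
  shows "w \<bullet> (parallel_sum_id D c *v w) \<le> v \<bullet> (D *v v) + c * (norm (v - w))^2"
proof -
  define P where "P = matrix_inv D + (1 / c) *\<^sub>R mat 1"
  have "spd P" unfolding P_def using assms by (simp add: spd_matrix_inv spd_add_scaled_id)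
  define z where "z = matrix_inv P *v w"
  have Pz: "P *v z = w"
    using matrix_inv_mult_vector(1)[OF spd_invertible[OF \<open>spd P\<close>]] by (simp add: z_def)
  then have "z \<bullet> w = z \<bullet> (matrix_inv D *v z) + (z \<bullet> z) / c"
    unfolding P_def by (auto simp: matrix_vector_mult_add_rdistrib inner_add_right scaled_id_mult_vector)
  moreover have "2 * (v \<bullet> z) - v \<bullet> (D *v v) \<le> z \<bullet> (matrix_inv D *v z)"
    by (rule spd_inverse_form_ge[OF assms(1)])
  moreover have "0 \<le> (c *\<^sub>R (w - v) - z) \<bullet> (c *\<^sub>R (w - v) - z)" by simp
  then have "2 * c * (z \<bullet> (w - v)) \<le> c^2 * ((w - v) \<bullet> (w - v)) + z \<bullet> z"
    by (simp add: inner_diff_left inner_diff_right inner_commute power2_eq_square algebra_simps)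
  then have "2 * (z \<bullet> (w - v)) \<le> c * ((w - v) \<bullet> (w - v)) + (z \<bullet> z) / c"
    using assms(2) by (simp add: power2_eq_square field_simps)
  then have "2 * (z \<bullet> w - z \<bullet> v) \<le> c * (norm (w - v))^2 + (z \<bullet> z) / c"
    by (simp add: inner_diff_right power2_norm_eq_inner)
  ultimately have "z \<bullet> w \<le> v \<bullet> (D *v v) + c * (norm (w - v))^2"
    by (simp add: inner_commute)
  then show ?thesis
    by (simp add: parallel_sum_id_def P_def z_def inner_commute norm_minus_commute)
qed

lemma parallel_sum_id_form_le_scaled:
  assumes "spd D" "0 < K" "0 < c" "\<And>v. v \<bullet> (D *v v) \<le> K * (norm v)^2"
  shows "w \<bullet> (parallel_sum_id D c *v w) \<le> (K * c / (K + c)) * (norm w)^2"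
proof -
  define \<theta> where "\<theta> = c / (K + c)"
  have "w \<bullet> (parallel_sum_id D c *v w) \<le> (\<theta> *\<^sub>R w) \<bullet> (D *v (\<theta> *\<^sub>R w)) + c * (norm (\<theta> *\<^sub>R w - w))^2"
    by (rule parallel_sum_id_form_le[OF assms(1,3)])
  also have "\<dots> \<le> K * (norm (\<theta> *\<^sub>R w))^2 + c * (norm (\<theta> *\<^sub>R w - w))^2"
    by (rule add_right_mono[OF assms(4)])
  also have "\<theta> *\<^sub>R w - w = (\<theta> - 1) *\<^sub>R w" by (simp add: scaleR_diff_left)
  also have "K * (norm (\<theta> *\<^sub>R w))^2 + c * (norm ((\<theta> - 1) *\<^sub>R w))^2
      = (K * \<theta>^2 + c * (1 - \<theta>)^2) * (norm w)^2"
    by (simp add: power_mult_distrib power2_commute[of \<theta> 1] algebra_simps del: scaleR_diff_left)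
  also have "K * \<theta>^2 + c * (1 - \<theta>)^2 = K * c / (K + c)"
  proof -
    have s: "K + c \<noteq> 0" using assms(2,3) by simp
    have "1 - \<theta> = K / (K + c)" using s by (simp add: \<theta>_def field_simps)
    then show ?thesis
      using s by (simp add: \<theta>_def power2_eq_square divide_simps) (simp add: algebra_simps)
  qed
  finally show ?thesis .
qed

section \<open>Rank-one updates and determinants\<close>

lemma matrix_add_rdistrib: "(B + C) ** A = B ** A + C ** (A :: real^'n^'n)"
  by (simp add: matrix_matrix_mult_def vec_eq_iff sum.distrib algebra_simps)

definition outer_product :: "real^'n \<Rightarrow> real^'n \<Rightarrow> real^'n^'n" where
  "outer_product u v = (\<chi> i j. u$i * v$j)"

lemma outer_product_mult_vector: "outer_product u v *v w = (v \<bullet> w) *\<^sub>R u"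
  by (simp add: outer_product_def vec_eq_iff matrix_vector_mult_def inner_vec_def
      sum_distrib_left mult_ac)

lemma matrix_mul_outer_product: "B ** outer_product u v = outer_product (B *v u) v"
  by (simp add: outer_product_def matrix_matrix_mult_def matrix_vector_mult_def vec_eq_iff
      sum_distrib_right mult.assoc)

lemma outer_product_mul_matrix: "outer_product u v ** B = outer_product u (transpose B *v v)"
  by (simp add: outer_product_def matrix_matrix_mult_def matrix_vector_mult_def transpose_def
      vec_eq_iff sum_distrib_left mult_ac)

lemma det_id_add_outer_product_axis: "det (mat 1 + outer_product (axis k 1) z) = 1 + z$k"
proof -
  let ?x = "axis k 1 + z"
  have "mat 1 + outer_product (axis k 1) z
      = (\<chi> i. if i = k then (\<Sum>j\<in>UNIV. ?x$j *s row j (mat 1)) else row i (mat 1))"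
    by (simp add: vec_eq_iff outer_product_def row_def mat_def axis_def if_distrib cong: if_cong)
  then show ?thesis
    using cramer_lemma_transpose[of k ?x "mat 1"] by simp
qed

text \<open>Conjugating by the matrix \<open>E\<close> that replaces the \<open>k\<close>-th unit column by \<open>u\<close>
  (with \<open>u$k \<noteq> 0\<close>) reduces the general case to a single nontrivial row.\<close>

lemma det_id_add_outer_product: "det (mat 1 + outer_product u v) = 1 + u \<bullet> v"
proof (cases "u = 0")
  case True
  then have "outer_product u v = 0" by (simp add: outer_product_def vec_eq_iff)
  then show ?thesis using True by simp
next
  case False
  then obtain k where "u$k \<noteq> 0" by (auto simp: vec_eq_iff)
  define E where "E = mat 1 + outer_product (u - axis k 1) (axis k 1)"
  define z where "z = transpose E *v v"
  have "transpose E = mat 1 + outer_product (axis k 1) (u - axis k 1)"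
    by (simp add: E_def transpose_def vec_eq_iff outer_product_def mat_def mult.commute)
  then have "det E = u$k"
    using det_id_add_outer_product_axis[of k "u - axis k 1"] det_transpose[of E] by simp
  have Ek: "E *v axis k 1 = u"
    by (simp add: E_def matrix_vector_mult_add_rdistrib outer_product_mult_vector)
  have "(mat 1 + outer_product u v) ** E = E ** (mat 1 + outer_product (axis k 1) z)"
    by (simp add: matrix_add_ldistrib matrix_add_rdistrib matrix_mul_outer_product
        outer_product_mul_matrix Ek z_def)
  then have "det (mat 1 + outer_product u v) * det E = det E * (1 + z$k)"
    by (metis det_mul det_id_add_outer_product_axis)
  moreover have "z$k = u \<bullet> v"
    using dot_lmul_matrix[of v E "axis k 1"] by (simp add: z_def Ek inner_axis' inner_commute)
  ultimately show ?thesis using \<open>det E = u$k\<close> \<open>u$k \<noteq> 0\<close> by simp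
qed

lemma det_add_outer:
  fixes A :: "real^'n^'n"
  assumes "invertible A"
  shows "det (A + s *\<^sub>R outer x) = det A * (1 + s * (x \<bullet> (matrix_inv A *v x)))"
proof -
  have "A ** outer_product (s *\<^sub>R (matrix_inv A *v x)) x = s *\<^sub>R outer x"
    by (simp add: matrix_mul_outer_product matrix_vector_mult_scaleR matrix_inv_mult_vector[OF assms])
       (simp add: outer_product_def outer_def vec_eq_iff mult.assoc)
  then have "A + s *\<^sub>R outer x = A ** (mat 1 + outer_product (s *\<^sub>R (matrix_inv A *v x)) x)"
    by (simp add: matrix_add_ldistrib)
  then show ?thesis by (simp add: det_mul det_id_add_outer_product inner_commute)
qed

lemma det_scaleR: "det (k *\<^sub>R A) = k ^ CARD('n) * det (A :: real^'n^'n)"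
  by (simp add: det_def prod.distrib sum_distrib_left mult_ac)

lemma sum_outer_axis: "(\<Sum>i\<in>UNIV. outer (axis i (1::real))) = (mat 1 :: real^'n^'n)"
proof -
  have "outer (axis i (1::real)) $ a $ b = (if a = i then (if a = b then 1 else 0) else 0)" for i a b :: 'n
    by (auto simp: outer_def axis_def)
  then show ?thesis by (simp add: vec_eq_iff sum_component mat_def)
qed

text \<open>Adding \<open>s I\<close> one unit rank-one term at a time: each step multiplies the
  determinant by \<open>1 + s e\<^sub>i\<^sup>T Q\<^sup>-\<^sup>1 e\<^sub>i \<le> 1 + s/\<alpha>\<close>.\<close>

lemma det_add_scaled_id_le:
  fixes P :: "real^'n^'n"
  assumes "spd P" "0 < \<alpha>" "0 \<le> s" "\<And>v. \<alpha> * (norm v)^2 \<le> v \<bullet> (P *v v)"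
  shows "det (P + s *\<^sub>R mat 1) \<le> det P * (1 + s / \<alpha>) ^ CARD('n)"
proof -
  define Q where "Q S = P + s *\<^sub>R (\<Sum>i\<in>S. outer (axis i (1::real)))" for S
  have "spd (Q S) \<and> (\<forall>v. \<alpha> * (norm v)^2 \<le> v \<bullet> (Q S *v v))
      \<and> det (Q S) \<le> det P * (1 + s / \<alpha>) ^ card S" if "finite S" for S
    using that
  proof (induction S rule: finite_induct)
    case empty
    then show ?case using assms(1,4) by (simp add: Q_def)
  next
    case (insert k S)
    let ?e = "axis k (1::real)"
    have "spd (Q S)" and low: "\<And>v. \<alpha> * (norm v)^2 \<le> v \<bullet> (Q S *v v)"
      and det_le: "det (Q S) \<le> det P * (1 + s / \<alpha>) ^ card S"
      using insert.IH by auto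
    have Q_insert: "Q (insert k S) = Q S + s *\<^sub>R outer ?e"
      using insert.hyps by (simp add: Q_def scaleR_add_right add.assoc)
    have form: "v \<bullet> ((s *\<^sub>R outer ?e) *v v) = s * (?e \<bullet> v)^2" for v
      by (simp add: outer_form flip: scaleR_matrix_vector_assoc)
    define \<rho> where "\<rho> = ?e \<bullet> (matrix_inv (Q S) *v ?e)"
    have "0 \<le> \<rho>" unfolding \<rho>_def by (rule spd_form_nonneg[OF spd_matrix_inv[OF \<open>spd (Q S)\<close>]])
    moreover have "\<rho> \<le> 1 / \<alpha>"
      using matrix_inv_form_le[OF \<open>spd (Q S)\<close> assms(2) low, of ?e] by (simp add: \<rho>_def)
    ultimately have "det (Q S) * (1 + s * \<rho>) \<le> det P * (1 + s / \<alpha>) ^ card S * (1 + s / \<alpha>)"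
      using det_le spd_det_pos[OF \<open>spd (Q S)\<close>] assms(3)
      by (intro mult_mono) (auto simp: mult_left_mono divide_inverse)
    then have "det (Q (insert k S)) \<le> det P * (1 + s / \<alpha>) ^ card (insert k S)"
      using insert.hyps
      by (simp add: Q_insert det_add_outer spd_invertible[OF \<open>spd (Q S)\<close>] \<rho>_def mult_ac)
    moreover have "spd (Q (insert k S))"
      unfolding Q_insert using \<open>spd (Q S)\<close> assms(3) form
      by (intro spd_add) (simp_all add: transpose_scalar transpose_outer)
    moreover have "\<alpha> * (norm v)^2 \<le> v \<bullet> (Q (insert k S) *v v)" for v
      using low[of v] form[of v] assms(3)
      by (simp add: Q_insert matrix_vector_mult_add_rdistrib inner_add_right add_increasing2)
    ultimately show ?case by blast
  qed
  from this[of UNIV] show ?thesis by (simp add: Q_def sum_outer_axis)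
qed

lemma det_parallel_sum_id_ge:
  fixes D :: "real^'n^'n"
  assumes "spd D" "0 < K" "0 < c" "\<And>v. v \<bullet> (D *v v) \<le> K * (norm v)^2"
  shows "det D / (1 + K / c) ^ CARD('n) \<le> det (parallel_sum_id D c)"
proof -
  define P where "P = matrix_inv D + (1 / c) *\<^sub>R mat 1"
  have "spd P" using assms by (simp add: P_def spd_add_scaled_id spd_matrix_inv)
  have "(1 / K) * (norm v)^2 \<le> v \<bullet> (matrix_inv D *v v)" for v
    using matrix_inv_form_ge[OF assms(1,2,4)] by simp
  then have "det P \<le> det (matrix_inv D) * (1 + (1 / c) / (1 / K)) ^ CARD('n)"
    unfolding P_def using assms(2,3)
    by (intro det_add_scaled_id_le spd_matrix_inv assms(1)) simp_all
  also have "\<dots> = (1 + K / c) ^ CARD('n) / det D"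
    by (simp add: det_matrix_inv spd_invertible assms(1))
  finally have "det D / (1 + K / c) ^ CARD('n) \<le> 1 / det P"
    using spd_det_pos[OF \<open>spd P\<close>] spd_det_pos[OF assms(1)] assms(2,3)
    by (simp add: field_simps)
  then show ?thesis
    by (simp add: parallel_sum_id_def P_def[symmetric] det_matrix_inv spd_invertible \<open>spd P\<close>)
qed

section \<open>One round of the forecaster\<close>

lemma sherman_morrison:
  fixes A :: "real^'n^'n" and x v :: "real^'n"
  assumes "spd A"
  defines "a \<equiv> matrix_inv A *v x"
  shows "matrix_inv (A + outer x) *v v
    = matrix_inv A *v v - ((x \<bullet> (matrix_inv A *v v)) / (1 + x \<bullet> a)) *\<^sub>R a"
proof (rule matrix_inv_vector_eq[OF spd_invertible[OF spd_add_outer[OF assms(1)]]])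
  have iA: "invertible A" using assms spd_invertible by blast
  define w where "w = matrix_inv A *v v"
  have "0 \<le> x \<bullet> a" unfolding a_def by (rule spd_form_nonneg[OF spd_matrix_inv[OF assms(1)]])
  then have "(x \<bullet> w) / (1 + x \<bullet> a) * (1 + x \<bullet> a) = x \<bullet> w" by simp
  moreover have "A *v w = v" "A *v a = x"
    by (simp_all add: w_def a_def matrix_inv_mult_vector[OF iA])
  ultimately show "(A + outer x) *v (w - ((x \<bullet> w) / (1 + x \<bullet> a)) *\<^sub>R a) = v"
    by (simp add: matrix_vector_mult_add_rdistrib matrix_vector_mult_diff_distrib
        matrix_vector_mult_scaleR outer_mult_vector inner_diff_right algebra_simps
        flip: scaleR_add_left add_divide_distrib)
qed

lemma rank_one_update_step_scalar:
  fixes q y g s :: real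
  assumes "0 \<le> q" "q \<le> 1"
  shows "(y - q * g)^2 - y^2 * (1 - q) - 2 * (q * (y - g)) * s + q * (1 - q) * (y - g)^2
      + (s - (1 - q) * (y - g))^2 \<le> (s + g - y)^2"
proof -
  have "(s + g - y)^2 - ((y - q * g)^2 - y^2 * (1 - q) - 2 * (q * (y - g)) * s
      + q * (1 - q) * (y - g)^2 + (s - (1 - q) * (y - g))^2) = q * (1 - q) * g^2"
    by (simp add: power2_eq_square algebra_simps)
  moreover have "0 \<le> q * (1 - q) * g^2" using assms by simp
  ultimately show ?thesis by linarith
qed

lemma rank_one_update_step:
  fixes A :: "real^'n^'n" and x v w :: "real^'n" and y :: real
  assumes "spd A"
  defines "D \<equiv> A + outer x" and "r \<equiv> x \<bullet> (matrix_inv A *v x)"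
  shows "(y - x \<bullet> (matrix_inv D *v (A *v w)))^2 - y^2 * (r / (1 + r))
      + (v - matrix_inv D *v (A *v w + y *\<^sub>R x)) \<bullet> (D *v (v - matrix_inv D *v (A *v w + y *\<^sub>R x)))
    \<le> (v - w) \<bullet> (A *v (v - w)) + (x \<bullet> v - y)^2"
proof -
  have iA: "invertible A" using assms(1) spd_invertible by blast
  define a where "a = matrix_inv A *v x"
  have Aa: "A *v a = x" by (simp add: a_def matrix_inv_mult_vector[OF iA])
  have r: "r = x \<bullet> a" by (simp add: r_def a_def)
  have "0 \<le> r" unfolding r_def by (rule spd_form_nonneg[OF spd_matrix_inv[OF assms(1)]])
  define q where "q = 1 / (1 + r)"
  have qr: "q * r = 1 - q" and gain: "r / (1 + r) = 1 - q" and "0 \<le> q" "q \<le> 1"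
    using \<open>0 \<le> r\<close> by (auto simp: q_def field_simps)
  have SM: "matrix_inv D *v z = matrix_inv A *v z - (q * (x \<bullet> (matrix_inv A *v z))) *\<^sub>R a" for z
    using sherman_morrison[OF assms(1), of x z] by (simp add: D_def a_def r q_def)
  define g where "g = x \<bullet> w"
  have "x \<bullet> (matrix_inv D *v (A *v w)) = g - g * (q * r)"
    by (simp add: SM matrix_inv_mult_vector[OF iA] inner_diff_right g_def r algebra_simps)
  then have pred: "x \<bullet> (matrix_inv D *v (A *v w)) = q * g"
    by (simp add: qr algebra_simps)
  define \<beta> where "\<beta> = q * (y - g)"
  have "matrix_inv D *v (A *v w + y *\<^sub>R x) = w + (y - q * g - y * (q * r)) *\<^sub>R a"
    by (simp add: SM matrix_vector_right_distrib matrix_vector_mult_scaleR matrix_inv_mult_vector[OF iA]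
        inner_add_right g_def r a_def[symmetric] algebra_simps)
  also have "y - q * g - y * (q * r) = \<beta>" by (simp add: qr \<beta>_def algebra_simps)
  finally have upd: "matrix_inv D *v (A *v w + y *\<^sub>R x) = w + \<beta> *\<^sub>R a" .
  define h where "h = v - w"
  define s where "s = x \<bullet> h"
  have "a \<bullet> (A *v h) = s" using spd_symmetric[OF assms(1), of a h] Aa by (simp add: s_def)
  then have Q: "(h - \<beta> *\<^sub>R a) \<bullet> (D *v (h - \<beta> *\<^sub>R a))
      = h \<bullet> (A *v h) - 2 * \<beta> * s + \<beta>^2 * r + (s - \<beta> * r)^2"
    by (simp add: D_def matrix_vector_mult_add_rdistrib matrix_vector_mult_diff_distrib
        matrix_vector_mult_scaleR outer_mult_vector inner_diff_left inner_diff_right Aa r s_def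
        inner_commute[of h x] inner_commute[of a x] power2_eq_square algebra_simps)
  have "\<beta> * r = (y - g) * (q * r)" "\<beta>^2 * r = \<beta> * (\<beta> * r)"
    by (simp_all add: \<beta>_def power2_eq_square mult_ac)
  then have \<beta>r: "\<beta> * r = (1 - q) * (y - g)" and \<beta>2r: "\<beta>^2 * r = q * (1 - q) * (y - g)^2"
    by (simp_all add: qr \<beta>_def power2_eq_square mult_ac)
  have "(x \<bullet> v - y)^2 = (s + g - y)^2" by (simp add: s_def h_def g_def inner_diff_right)
  then have "(y - q * g)^2 - y^2 * (1 - q) + (h \<bullet> (A *v h) - 2 * \<beta> * s + \<beta>^2 * r + (s - \<beta> * r)^2)
      \<le> h \<bullet> (A *v h) + (x \<bullet> v - y)^2"
    using rank_one_update_step_scalar[OF \<open>0 \<le> q\<close> \<open>q \<le> 1\<close>, of y g s]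
    unfolding \<beta>r \<beta>2r unfolding \<beta>_def by linarith
  moreover have "v - (w + \<beta> *\<^sub>R a) = h - \<beta> *\<^sub>R a" by (simp add: h_def)
  then have "(v - matrix_inv D *v (A *v w + y *\<^sub>R x)) \<bullet> (D *v (v - matrix_inv D *v (A *v w + y *\<^sub>R x)))
      = h \<bullet> (A *v h) - 2 * \<beta> * s + \<beta>^2 * r + (s - \<beta> * r)^2"
    unfolding upd by (simp only: Q)
  ultimately show ?thesis unfolding pred gain h_def[symmetric] by linarith
qed

section \<open>The LASER recursion\<close>

locale laser =
  fixes b c :: real and x :: "nat \<Rightarrow> real^'n" and y :: "nat \<Rightarrow> real"
  assumes b_pos: "0 < b" and b_less_c: "b < c"
begin

abbreviation D :: "nat \<Rightarrow> real^'n^'n" where "D \<equiv> laser_D b c x"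

definition A :: "nat \<Rightarrow> real^'n^'n" where "A t = parallel_sum_id (D t) c"

text \<open>In terms of \<open>W\<close>, round \<open>t + 1\<close> is a Vovk-Azoury-Warmuth step started from the
  estimate \<open>W t\<close> with regulariser \<open>A t\<close>.\<close>

definition W :: "nat \<Rightarrow> real^'n" where "W t = matrix_inv (D t) *v laser_e b c x y t"

definition leverage :: "nat \<Rightarrow> real" where
  "leverage t = x (Suc t) \<bullet> (matrix_inv (A t) *v x (Suc t))"

lemma c_pos: "0 < c"
  using b_pos b_less_c by simp

lemma D_Suc: "D (Suc t) = A t + outer (x (Suc t))"
  by (simp add: A_def parallel_sum_id_def)

declare laser_D.simps(2) [simp del]

lemma spd_D: "spd (D t)"
proof (induction t)
  case 0
  then show ?case using b_pos b_less_c by (simp add: spd_scaled_id)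
next
  case (Suc t)
  then show ?case unfolding D_Suc A_def by (intro spd_add_outer spd_parallel_sum_id c_pos)
qed

lemma spd_A: "spd (A t)"
  by (simp add: A_def spd_parallel_sum_id spd_D c_pos)

text \<open>\<open>D 0\<close> is chosen so that the first round starts from the ridge regulariser \<open>b I\<close>.\<close>

lemma A_0: "A 0 = b *\<^sub>R mat 1"
proof -
  have "b * c / (c - b) * c / (b * c / (c - b) + c) = b"
    using b_pos b_less_c by (simp add: field_simps)
  then show ?thesis
    using b_pos b_less_c by (simp add: A_def parallel_sum_id_scaled_id)
qed

lemma laser_e_Suc: "laser_e b c x y (Suc t) = A t *v W t + y (Suc t) *\<^sub>R x (Suc t)"
  by (simp add: matrix_inv_id_add_scaled spd_D c_pos A_def W_def matrix_vector_mul_assoc)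

lemma laser_pred_Suc:
  "laser_pred b c x y (Suc t) = x (Suc t) \<bullet> (matrix_inv (D (Suc t)) *v (A t *v W t))"
  unfolding laser_pred_def
  by (simp add: matrix_inv_id_add_scaled spd_D c_pos A_def W_def matrix_vector_mul_assoc)

lemma W_Suc: "W (Suc t) = matrix_inv (D (Suc t)) *v (A t *v W t + y (Suc t) *\<^sub>R x (Suc t))"
  by (simp only: W_def[of "Suc t"] laser_e_Suc)

lemma leverage_nonneg: "0 \<le> leverage t"
  unfolding leverage_def by (rule spd_form_nonneg[OF spd_matrix_inv[OF spd_A]])

lemma regret_step:
  "(y (Suc t) - laser_pred b c x y (Suc t))^2 - (y (Suc t))^2 * (leverage t / (1 + leverage t))
      + (v - W (Suc t)) \<bullet> (D (Suc t) *v (v - W (Suc t)))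
    \<le> (v - W t) \<bullet> (A t *v (v - W t)) + (x (Suc t) \<bullet> v - y (Suc t))^2"
  using rank_one_update_step[OF spd_A, where x = "x (Suc t)" and y = "y (Suc t)" and w = "W t" and v = v]
  by (simp only: laser_pred_Suc W_Suc D_Suc leverage_def)

lemma regret_telescope:
  "(\<Sum>t=1..Suc k. (y t - laser_pred b c x y t)^2) + (u (Suc k) - W (Suc k)) \<bullet> (D (Suc k) *v (u (Suc k) - W (Suc k)))
    \<le> b * (norm (u 1))^2 + (\<Sum>t=1..Suc k. (x t \<bullet> u t - y t)^2)
      + c * (\<Sum>t=1..k. (norm (u t - u (Suc t)))^2)
      + (\<Sum>t=1..Suc k. (y t)^2 * (leverage (t - 1) / (1 + leverage (t - 1))))"
proof (induction k)
  case 0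
  have "W 0 = 0" by (simp add: W_def)
  then show ?case
    using regret_step[of 0 "u 1"] by (simp add: A_0 scaled_id_form)
next
  case (Suc k)
  have "(u (Suc (Suc k)) - W (Suc k)) \<bullet> (A (Suc k) *v (u (Suc (Suc k)) - W (Suc k)))
      \<le> (u (Suc k) - W (Suc k)) \<bullet> (D (Suc k) *v (u (Suc k) - W (Suc k)))
        + c * (norm (u (Suc k) - u (Suc (Suc k))))^2"
    using parallel_sum_id_form_le[OF spd_D c_pos, of "u (Suc (Suc k)) - W (Suc k)" "Suc k"
        "u (Suc k) - W (Suc k)"]
    by (simp add: A_def)
  then show ?case
    using Suc.IH regret_step[of "Suc k" "u (Suc (Suc k))"] by (simp add: algebra_simps)
qed

lemma gain_le_log_det: "leverage t / (1 + leverage t) \<le> ln (det (D (Suc t))) - ln (det (A t))"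
proof -
  have "det (D (Suc t)) = det (A t) * (1 + leverage t)"
    using det_add_outer[OF spd_invertible[OF spd_A[of t]], where s = 1 and x = "x (Suc t)"]
    unfolding D_Suc leverage_def by simp
  then have "ln (det (D (Suc t))) = ln (det (A t)) + ln (1 + leverage t)"
    using spd_det_pos[OF spd_A[of t]] leverage_nonneg[of t] by (simp add: ln_mult add_pos_nonneg)
  then show ?thesis using ln_add1_ge[OF leverage_nonneg, of t] by (simp add: add.commute)
qed

lemma log_det_scaled_D: "ln (det ((1 / b) *\<^sub>R D t)) = ln (det (D t)) - CARD('n) * ln b"
  using spd_det_pos[OF spd_D[of t]] b_pos by (simp add: det_scaleR ln_mult ln_realpow ln_div)

context
  fixes T :: nat and X M :: real
  assumes x_bound: "\<And>t. 1 \<le> t \<Longrightarrow> t \<le> T \<Longrightarrow> (norm (x t))^2 \<le> X^2"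
    and M: "b + X^2 \<le> M" "M * c / (M + c) + X^2 \<le> M"
begin

lemma M_pos: "0 < M"
  using M(1) b_pos zero_le_power2[of X] by linarith

lemma D_form_le:
  shows "1 \<le> t \<Longrightarrow> t \<le> T \<Longrightarrow> v \<bullet> (D t *v v) \<le> M * (norm v)^2"
proof (induction t arbitrary: v)
  case 0
  then show ?case by simp
next
  case (Suc t)
  obtain K where A_le: "\<And>v. v \<bullet> (A t *v v) \<le> K * (norm v)^2" and "K + X^2 \<le> M"
  proof (cases "t = 0")
    case True
    then show ?thesis using that[of b] M(1) by (simp add: A_0 scaled_id_form)
  next
    case False
    have "v \<bullet> (A t *v v) \<le> M * c / (M + c) * (norm v)^2" for v
      using Suc False M_pos unfolding A_def by (intro parallel_sum_id_form_le_scaled spd_D c_pos) auto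
    then show ?thesis using that M(2) by blast
  qed
  have "(x (Suc t) \<bullet> v)^2 \<le> X^2 * (norm v)^2"
  proof -
    have "(x (Suc t) \<bullet> v)^2 \<le> (norm (x (Suc t)) * norm v)^2"
      using Cauchy_Schwarz_ineq2 by (metis abs_ge_zero power2_abs power_mono)
    also have "\<dots> \<le> X^2 * (norm v)^2"
      using x_bound[of "Suc t"] Suc.prems by (simp add: power_mult_distrib mult_right_mono)
    finally show ?thesis .
  qed
  then have "v \<bullet> (D (Suc t) *v v) \<le> (K + X^2) * (norm v)^2"
    using A_le[of v] unfolding D_Suc
    by (simp add: matrix_vector_mult_add_rdistrib inner_add_right outer_form distrib_right)
  also have "\<dots> \<le> M * (norm v)^2" using \<open>K + X^2 \<le> M\<close> by (simp add: mult_right_mono)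
  finally show ?case .
qed

lemma log_det_A_ge:
  assumes t: "1 \<le> t" "t \<le> T"
  shows "ln (det (D t)) - CARD('n) * (M / c) \<le> ln (det (A t))"
proof -
  have "0 < 1 + M / c" using M_pos c_pos by (simp add: add_pos_pos)
  then have pos: "0 < (1 + M / c) ^ CARD('n)" by simp
  have "det (D t) / (1 + M / c) ^ CARD('n) \<le> det (A t)"
    unfolding A_def using D_form_le[OF t] M_pos
    by (intro det_parallel_sum_id_ge spd_D c_pos) auto
  moreover have "0 < det (D t) / (1 + M / c) ^ CARD('n)"
    using spd_det_pos[OF spd_D[of t]] pos by simp
  ultimately have "ln (det (D t) / (1 + M / c) ^ CARD('n)) \<le> ln (det (A t))"
    by (rule ln_mono)
  moreover have "ln (det (D t) / (1 + M / c) ^ CARD('n)) = ln (det (D t)) - CARD('n) * ln (1 + M / c)"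
    using spd_det_pos[OF spd_D[of t]] pos \<open>0 < 1 + M / c\<close> by (simp add: ln_div ln_realpow)
  ultimately have "ln (det (D t)) - CARD('n) * ln (1 + M / c) \<le> ln (det (A t))" by simp
  moreover have "ln (1 + M / c) \<le> M / c"
    using M_pos c_pos by (intro ln_add_one_self_le_self) simp
  ultimately show ?thesis by (smt (verit) mult_left_mono of_nat_0_le_iff)
qed

lemma sum_gain_le_log_det:
  shows "Suc k \<le> T \<Longrightarrow> (\<Sum>t=1..Suc k. leverage (t - 1) / (1 + leverage (t - 1)))
    \<le> ln (det ((1 / b) *\<^sub>R D (Suc k))) + k * (CARD('n) * (M / c))"
proof (induction k)
  case 0
  have "ln (det (A 0)) = CARD('n) * ln b"
    using b_pos by (simp add: A_0 det_scaleR ln_realpow)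
  then show ?case using gain_le_log_det[of 0] by (simp add: log_det_scaled_D)
next
  case (Suc k)
  have "ln (det (D (Suc k))) - CARD('n) * (M / c) \<le> ln (det (A (Suc k)))"
    using log_det_A_ge[of "Suc k"] Suc.prems by simp
  moreover have "real (Suc k) * (CARD('n) * (M / c)) = k * (CARD('n) * (M / c)) + CARD('n) * (M / c)"
    by (simp add: algebra_simps add_divide_distrib)
  moreover have "(\<Sum>t=1..Suc (Suc k). leverage (t - 1) / (1 + leverage (t - 1)))
      = (\<Sum>t=1..Suc k. leverage (t - 1) / (1 + leverage (t - 1))) + leverage (Suc k) / (1 + leverage (Suc k))"
    by simp
  ultimately show ?case
    using Suc gain_le_log_det[of "Suc k"] log_det_scaled_D[of "Suc k"] log_det_scaled_D[of "Suc (Suc k)"]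
    by linarith
qed

end

lemma trace_D_0: "trace (D 0) = b * c / (c - b) * CARD('n)"
  by (simp add: trace_def mat_def)

theorem regret_bound:
  assumes "1 \<le> T"
    and x_bound: "\<And>t. 1 \<le> t \<Longrightarrow> t \<le> T \<Longrightarrow> (norm (x t))^2 \<le> X^2"
    and y_bound: "\<And>t. 1 \<le> t \<Longrightarrow> t \<le> T \<Longrightarrow> \<bar>y t\<bar> \<le> Y"
    and M: "b + X^2 \<le> M" "M * c / (M + c) + X^2 \<le> M"
  shows "laser_loss b c x y T \<le> b * (norm (u 1))^2 + comp_loss u x y T
      + Y^2 * ln (det ((1 / b) *\<^sub>R D T)) + (1 / c) * Y^2 * trace (D 0)
      + c * variation u T + (1 / c) * Y^2 * real T * real CARD('n) * M"
proof -
  obtain k where T: "T = Suc k" using assms(1) by (cases T) auto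
  define gain where "gain t = leverage (t - 1) / (1 + leverage (t - 1))" for t
  have "0 \<le> M" using M(1) b_pos zero_le_power2[of X] by linarith
  then have "0 \<le> Y^2 * (CARD('n) * (M / c))" using c_pos by simp
  have "0 \<le> (1 / c) * Y^2 * trace (D 0)"
    unfolding trace_D_0 using b_pos b_less_c by simp
  have "0 \<le> (u T - W T) \<bullet> (D T *v (u T - W T))" by (rule spd_form_nonneg[OF spd_D])
  then have "laser_loss b c x y T
      \<le> b * (norm (u 1))^2 + comp_loss u x y T + c * variation u T + (\<Sum>t=1..T. (y t)^2 * gain t)"
    using regret_telescope[of k u]
    by (simp add: laser_loss_def comp_loss_def variation_def gain_def T)
  also have "(\<Sum>t=1..T. (y t)^2 * gain t) \<le> (\<Sum>t=1..T. Y^2 * gain t)"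
  proof (rule sum_mono)
    fix t assume "t \<in> {1..T}"
    then have "\<bar>y t\<bar>^2 \<le> Y^2" using y_bound[of t] by (intro power_mono) auto
    then have "(y t)^2 \<le> Y^2" by simp
    then show "(y t)^2 * gain t \<le> Y^2 * gain t"
      by (rule mult_right_mono) (simp add: gain_def leverage_nonneg)
  qed
  also have "\<dots> = Y^2 * (\<Sum>t=1..T. gain t)" by (simp add: sum_distrib_left)
  also have "\<dots> \<le> Y^2 * (ln (det ((1 / b) *\<^sub>R D T)) + (real T - 1) * (CARD('n) * (M / c)))"
    using sum_gain_le_log_det[OF x_bound M, where k = k] by (intro mult_left_mono) (simp_all add: T gain_def)
  also have "\<dots> = Y^2 * ln (det ((1 / b) *\<^sub>R D T)) + (1 / c) * Y^2 * real T * real CARD('n) * M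
      - Y^2 * (CARD('n) * (M / c))"
    by (simp add: algebra_simps add_divide_distrib diff_divide_distrib)
  also have "\<dots> \<le> Y^2 * ln (det ((1 / b) *\<^sub>R D T)) + (1 / c) * Y^2 * real T * real CARD('n) * M"
    using \<open>0 \<le> Y^2 * (CARD('n) * (M / c))\<close> by linarith
  finally show ?thesis using \<open>0 \<le> (1 / c) * Y^2 * trace (D 0)\<close> by simp
qed

end

section \<open>Tuning \<open>c\<close>\<close>

text \<open>The positive fixed point of \<open>K \<mapsto> K c/(K + c) + X\<^sup>2\<close> is
  \<open>(X\<^sup>2 + sqrt (X\<^sup>4 + 4 X\<^sup>2 c))/2\<close>; the hypothesis puts \<open>M\<close> above it.\<close>

lemma shrink_map_le:
  fixes X c M :: real
  assumes "0 < c" "(3 * X^2 + sqrt (X^4 + 4 * X^2 * c)) / 2 \<le> M"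
  shows "M * c / (M + c) + X^2 \<le> M"
proof -
  define s where "s = sqrt (X^4 + 4 * X^2 * c)"
  have "0 \<le> X^4 + 4 * X^2 * c" using assms(1) by simp
  then have "0 \<le> s" "s^2 = X^4 + 4 * X^2 * c" by (simp_all add: s_def)
  have M: "3 * X^2 + s \<le> 2 * M" using assms(2) unfolding s_def[symmetric] by simp
  then have "s / 2 \<le> M - X^2 / 2" using zero_le_power2[of X] by linarith
  then have "(s / 2)^2 \<le> (M - X^2 / 2)^2" by (rule power_mono) (simp add: \<open>0 \<le> s\<close>)
  then have "X^2 * c \<le> M * (M - X^2)"
    using \<open>s^2 = _\<close> by (simp add: power2_eq_square power4_eq_xxxx field_simps)
  moreover have "0 < M + c" using assms(1) M \<open>0 \<le> s\<close> zero_le_power2[of X] by linarith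
  ultimately show ?thesis by (simp add: field_simps)
qed

lemma M_max_le_sqrt_c:
  fixes X b c :: real
  assumes "0 < X" "0 < b" "9 / 8 * X^2 \<le> c" "(b + X^2)^2 / (8 * X^2) \<le> c"
  shows "max ((3 * X^2 + sqrt (X^4 + 4 * X^2 * c)) / 2) (b + X^2) \<le> 2 * sqrt 2 * X * sqrt c"
proof -
  define q where "q = sqrt (2::real)"
  define t where "t = sqrt c"
  have "0 < X^2" using assms(1) by simp
  then have "0 < c" using assms(3) by linarith
  then have "0 < t" "t^2 = c" by (simp_all add: t_def)
  have "0 < q" "q^2 = 2" by (simp_all add: q_def)
  have "b + X^2 \<le> 2 * q * X * t"
  proof (rule power2_le_imp_le)
    have "(b + X^2)^2 \<le> 8 * X^2 * c"
      using assms(4) \<open>0 < X^2\<close> by (simp add: divide_le_eq mult.commute)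
    then show "(b + X^2)^2 \<le> (2 * q * X * t)^2"
      using \<open>t^2 = c\<close> \<open>q^2 = 2\<close> by (simp add: power_mult_distrib)
  qed (use assms(1) \<open>0 < t\<close> \<open>0 < q\<close> in simp)
  have "3 * q * X \<le> 4 * t"
  proof (rule power2_le_imp_le)
    show "(3 * q * X)^2 \<le> (4 * t)^2"
      using assms(3) \<open>t^2 = c\<close> \<open>q^2 = 2\<close> by (simp add: power_mult_distrib)
  qed (use \<open>0 < t\<close> in simp)
  have "sqrt (X^4 + 4 * X^2 * c) \<le> 4 * q * X * t - 3 * X^2"
  proof (rule real_le_lsqrt)
    have "3 * q * X * (q * X) \<le> 4 * t * (q * X)"
      using \<open>3 * q * X \<le> 4 * t\<close> \<open>0 < q\<close> assms(1) by (intro mult_right_mono) auto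
    then have "3 * X^2 * q^2 \<le> 4 * q * X * t" by (simp add: power2_eq_square mult_ac)
    then show "0 \<le> 4 * q * X * t - 3 * X^2"
      unfolding \<open>q^2 = 2\<close> using zero_le_power2[of X] by linarith
    text \<open>A ring identity up to the term carrying \<open>q\<^sup>2 - 2 = 0\<close>.\<close>
    have "4 * ((4 * q * X * t - 3 * X^2)^2 - (X^4 + 4 * X^2 * t^2))
        = X^2 * (14 * X^2 + 18 * q * X * (4 * t - 3 * q * X) + 7 * (4 * t - 3 * q * X)^2)
          + (q^2 - 2) * (64 * X^2 * t^2 - 9 * X^4)"
      by (simp add: power2_eq_square power4_eq_xxxx algebra_simps)
    moreover have "0 \<le> X^2 * (14 * X^2 + 18 * q * X * (4 * t - 3 * q * X) + 7 * (4 * t - 3 * q * X)^2)"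
      using \<open>3 * q * X \<le> 4 * t\<close> \<open>0 < q\<close> assms(1) by (intro mult_nonneg_nonneg add_nonneg_nonneg) auto
    ultimately show "X^4 + 4 * X^2 * c \<le> (4 * q * X * t - 3 * X^2)^2"
      using \<open>q^2 = 2\<close> \<open>t^2 = c\<close> by simp
  qed
  then show ?thesis using \<open>b + X^2 \<le> _\<close> by (simp add: q_def t_def)
qed

lemma tuned_c_balance:
  fixes S V c :: real
  assumes "0 < S" "0 < V" "c = (S / V) powr (2 / 3)"
  shows "c * V + 2 * S / sqrt c = 3 * (S powr (2 / 3) * V powr (1 / 3))"
proof -
  define Z where "Z = S / V"
  have "0 < Z" using assms(1,2) by (simp add: Z_def)
  have c: "c = Z powr (2 / 3)" by (simp add: assms(3) Z_def)
  have sqrt_c: "sqrt c = Z powr (1 / 3)"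
    using \<open>0 < Z\<close> by (simp add: c powr_powr flip: powr_half_sqrt)
  have S: "S = Z powr (1 / 3) * (Z powr (2 / 3) * V)"
    using \<open>0 < Z\<close> assms(1,2) by (simp add: Z_def mult.assoc[symmetric] flip: powr_add)
  have "c * V + 2 * S / sqrt c = 3 * (Z powr (2 / 3) * V)"
    unfolding sqrt_c unfolding c S using \<open>0 < Z\<close> by simp
  also have "Z powr (2 / 3) * V = S powr (2 / 3) * (V powr (1 / 3) * V powr (2 / 3)) / V powr (2 / 3)"
    using assms(1,2) by (simp add: Z_def powr_divide flip: powr_add)
  finally show ?thesis using assms(2) by simp
qed

lemma tuned_excess_le:
  fixes \<epsilon> b c X Y V T d :: real
  defines "B \<equiv> sqrt 2 * Y^2 * d * X"
    and "\<mu> \<equiv> max (9 / 8 * X^2) ((b + X^2)^2 / (8 * X^2))"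
  assumes "0 < \<epsilon>" "\<epsilon> < 1" "b = \<epsilon> * c" "0 < b" "0 < X" "0 \<le> T" "0 \<le> d" "0 < V"
    and V_le: "V \<le> T * B / \<mu> powr (3 / 2)"
    and c: "c = (sqrt 2 * T * Y^2 * d * X / V) powr (2 / 3)"
  shows "(1 / c) * Y^2 * (b * c / (c - b) * d) + c * V
      + (1 / c) * Y^2 * T * d * max ((3 * X^2 + sqrt (X^4 + 4 * X^2 * c)) / 2) (b + X^2)
    \<le> 3 * B powr (2 / 3) * T powr (2 / 3) * V powr (1 / 3) + \<epsilon> / (1 - \<epsilon>) * Y^2 * d"
proof -
  have "0 < c" using assms(3,4,5,6) by (smt (verit) mult_nonneg_nonpos)
  have "0 < \<mu>" using assms(7) by (simp add: \<mu>_def max.strict_coboundedI1)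
  have "0 \<le> B" using assms(7,9) by (simp add: B_def)
  have "0 < T * B"
  proof (rule ccontr)
    assume "\<not> 0 < T * B"
    then have "T * B = 0" using \<open>0 \<le> B\<close> assms(8) by (simp add: less_le)
    then show False using V_le assms(10) by auto
  qed
  have c': "c = (T * B / V) powr (2 / 3)" by (simp add: c B_def mult_ac)
  have "\<mu> powr (3 / 2) \<le> T * B / V"
    using V_le \<open>0 < \<mu>\<close> assms(10) by (simp add: field_simps)
  then have "(\<mu> powr (3 / 2)) powr (2 / 3) \<le> c"
    unfolding c' using \<open>0 < \<mu>\<close> by (intro powr_mono2) simp_all
  then have "\<mu> \<le> c" using \<open>0 < \<mu>\<close> by (simp add: powr_powr)
  then have "max ((3 * X^2 + sqrt (X^4 + 4 * X^2 * c)) / 2) (b + X^2) \<le> 2 * sqrt 2 * X * sqrt c"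
    using assms(6,7) by (intro M_max_le_sqrt_c) (simp_all add: \<mu>_def)
  then have "(1 / c) * Y^2 * T * d * max ((3 * X^2 + sqrt (X^4 + 4 * X^2 * c)) / 2) (b + X^2)
      \<le> (1 / c) * Y^2 * T * d * (2 * sqrt 2 * X * sqrt c)"
    using \<open>0 < c\<close> assms(8,9) by (intro mult_left_mono) simp_all
  also have "\<dots> = (sqrt c / c) * (2 * (T * B))"
    by (simp add: B_def divide_inverse mult_ac)
  also have "sqrt c / c = 1 / sqrt c"
    using \<open>0 < c\<close> by (metis real_div_sqrt less_eq_real_def div_by_1 divide_divide_eq_right mult.commute)
  finally have "c * V + (1 / c) * Y^2 * T * d * max ((3 * X^2 + sqrt (X^4 + 4 * X^2 * c)) / 2) (b + X^2)
      \<le> 3 * B powr (2 / 3) * T powr (2 / 3) * V powr (1 / 3)"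
    using tuned_c_balance[OF \<open>0 < T * B\<close> assms(10) c'] \<open>0 \<le> B\<close> assms(8)
    by (simp add: powr_mult mult_ac)
  moreover have "(1 / c) * Y^2 * (b * c / (c - b) * d) = \<epsilon> / (1 - \<epsilon>) * Y^2 * d"
  proof -
    have "c - \<epsilon> * c = c * (1 - \<epsilon>)" "1 - \<epsilon> \<noteq> 0" using assms(4) by (simp_all add: algebra_simps)
    then show ?thesis using \<open>0 < c\<close> assms(3) unfolding assms(5) by (simp add: field_simps)
  qed
  ultimately show ?thesis by linarith
qed

theorem corollary8:
  fixes x u :: "nat \<Rightarrow> real^'n" and y :: "nat \<Rightarrow> real"
    and b c X Y :: real and T :: nat
  assumes "T \<ge> 1" and "0 < b" and "b < c" and "X > 0" and "Y \<ge> 0"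
    and "\<And>t. 1 \<le> t \<Longrightarrow> t \<le> T \<Longrightarrow> (norm (x t))^2 \<le> X^2"
    and "\<And>t. 1 \<le> t \<Longrightarrow> t \<le> T \<Longrightarrow> \<bar>y t\<bar> \<le> Y"
  shows "laser_loss b c x y T \<le>
           b * (norm (u 1))^2 + comp_loss u x y T
           + Y^2 * ln (det ((1 / b) *\<^sub>R laser_D b c x T))
           + (1 / c) * Y^2 * trace (laser_D b c x 0)
           + c * variation u T
           + (1 / c) * Y^2 * real T * real CARD('n)
               * max ((3 * X^2 + sqrt (X^4 + 4 * X^2 * c)) / 2) (b + X^2)
    \<and> (\<forall>\<epsilon>. 0 < \<epsilon> \<and> \<epsilon> < 1 \<and> b = \<epsilon> * c \<and>
           variation u T > 0 \<and>
           variation u T \<le> real T * (sqrt 2 * Y^2 * real CARD('n) * X)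
               / (max (9 / 8 * X^2) ((b + X^2)^2 / (8 * X^2))) powr (3 / 2) \<and>
           c = (sqrt 2 * real T * Y^2 * real CARD('n) * X / variation u T) powr (2 / 3) \<longrightarrow>
           laser_loss b c x y T \<le>
             b * (norm (u 1))^2
             + 3 * (sqrt 2 * Y^2 * real CARD('n) * X) powr (2 / 3) * real T powr (2 / 3)
                 * variation u T powr (1 / 3)
             + \<epsilon> / (1 - \<epsilon>) * Y^2 * real CARD('n)
             + comp_loss u x y T
             + Y^2 * ln (det ((1 / b) *\<^sub>R laser_D b c x T)))"
proof -
  interpret laser b c x y using assms(2,3) by unfold_locales
  define M where "M = max ((3 * X^2 + sqrt (X^4 + 4 * X^2 * c)) / 2) (b + X^2)"
  have M: "b + X^2 \<le> M" "M * c / (M + c) + X^2 \<le> M"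
    using shrink_map_le[OF c_pos, of X M] by (simp_all add: M_def)
  note first = regret_bound[OF assms(1,6,7) M, of u]
  show ?thesis
  proof (intro conjI allI impI, goal_cases)
    case 1
    show ?case using first by (simp add: M_def)
  next
    case (2 \<epsilon>)
    then show ?case
      using first tuned_excess_le[of \<epsilon> b c X "real T" "real CARD('n)" "variation u T" Y] assms(2,4)
      unfolding trace_D_0 M_def by auto
  qed
qed

end
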